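(* Consider an open quantum system on a finite-dimensional Hilbert space $\mathcal H$ with Hamiltonian $H$ and a single coupling operator $L$, and let $V$ be a Lyapunov operator of the system (commuting with $H$). If $cV\le\mathfrak D(V)$ for some constant $c>0$, then for every initial density state the state trajectory $\rho_t$ converges to $Z_V$, i.e. every limit point of $\rho_t$ as $t\to\infty$ lies in $Z_V$.
   Context: The density state (positive semidefinite, trace one) evolves by $\dot\rho_t=-i[H,\rho_t]+L\rho_tL^\dagger-\tfrac12L^\dagger L\rho_t-\tfrac12\rho_tL^\dagger L$; for an observable $X$ commuting with $H$ the generator is $\mathcal G(X)=L^\dagger XL-\tfrac12L^\dagger LX-\tfrac12XL^\dagger L$ and $\frac{d}{dt}\operatorname{tr}(X\rho_t)=\operatorname{tr}(\mathcal G(X)\rho_t)$. Standing assumption: the observables considered commute with $H$. A Lyapunov operator is a self-adjoint $V\ge0$ whose smallest eigenvalue is $0$ and with $\mathcal G(V)\le0$. The dissipation functional is $\mathfrak D(X)=\mathcal G(X^\dagger X)-\mathcal G(X^\dagger)X-X^\dagger\mathcal G(X)=[L^\dagger,X^\dagger][X,L]$. $Z_V=\{\rho \text{ density state}:\operatorname{tr}(V\rho)=0\}$; convergence of states means convergence of $\operatorname{tr}(\rho Y)$ for all operators $Y$. *)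

theory Defs
  imports "HOL-Analysis.Analysis"
begin

type_synonym 'n op = "complex^'n^'n"

definition adj :: "'n::finite op \<Rightarrow> 'n op" where
  "adj A = (\<chi> i j. cnj (A $ j $ i))"

definition smult_op :: "complex \<Rightarrow> 'n::finite op \<Rightarrow> 'n op" where
  "smult_op c A = (\<chi> i j. c * A $ i $ j)"

definition self_adjoint :: "'n::finite op \<Rightarrow> bool" where
  "self_adjoint A \<longleftrightarrow> adj A = A"

definition psd :: "'n::finite op \<Rightarrow> bool" where
  "psd A \<longleftrightarrow> self_adjoint A \<and>
     (\<forall>x::complex^'n. 0 \<le> Re (\<Sum>i\<in>UNIV. cnj (x $ i) * (A *v x) $ i))"

definition loewner_le :: "'n::finite op \<Rightarrow> 'n op \<Rightarrow> bool" where
  "loewner_le A B \<longleftrightarrow> self_adjoint A \<and> self_adjoint B \<and> psd (B - A)"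

definition eigenvalues :: "'n::finite op \<Rightarrow> complex set" where
  "eigenvalues A = {\<mu>. \<exists>x::complex^'n. x \<noteq> 0 \<and> A *v x = smult_op \<mu> (mat 1) *v x}"

definition density_state :: "'n::finite op \<Rightarrow> bool" where
  "density_state \<rho> \<longleftrightarrow> psd \<rho> \<and> trace \<rho> = 1"

definition lindblad :: "'n::finite op \<Rightarrow> 'n op \<Rightarrow> 'n op \<Rightarrow> 'n op" where
  "lindblad H L \<rho> =
     smult_op (-\<i>) (H ** \<rho> - \<rho> ** H) + L ** \<rho> ** adj L
     - smult_op (1/2) (adj L ** L ** \<rho>) - smult_op (1/2) (\<rho> ** adj L ** L)"

text \<open>Generator on observables commuting with H.\<close>
definition gen :: "'n::finite op \<Rightarrow> 'n op \<Rightarrow> 'n op" where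
  "gen L X = adj L ** X ** L - smult_op (1/2) (adj L ** L ** X) - smult_op (1/2) (X ** adj L ** L)"

definition dissip :: "'n::finite op \<Rightarrow> 'n op \<Rightarrow> 'n op" where
  "dissip L X = gen L (adj X ** X) - gen L (adj X) ** X - adj X ** gen L X"

definition lyapunov_op :: "'n::finite op \<Rightarrow> 'n op \<Rightarrow> bool" where
  "lyapunov_op L V \<longleftrightarrow> self_adjoint V \<and> psd V
     \<and> 0 \<in> eigenvalues V \<and> (\<forall>\<mu>\<in>eigenvalues V. 0 \<le> Re \<mu>)
     \<and> loewner_le (gen L V) 0"

definition Z_set :: "'n::finite op \<Rightarrow> 'n op set" where
  "Z_set V = {\<rho>. density_state \<rho> \<and> trace (V ** \<rho>) = 0}"

definition state_conv :: "(nat \<Rightarrow> 'n::finite op) \<Rightarrow> 'n op \<Rightarrow> bool" where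
  "state_conv r \<sigma> \<longleftrightarrow> (\<forall>Y. (\<lambda>k. trace (r k ** Y)) \<longlonglongrightarrow> trace (\<sigma> ** Y))"

definition limit_point_at_top :: "(real \<Rightarrow> 'n::finite op) \<Rightarrow> 'n op \<Rightarrow> bool" where
  "limit_point_at_top \<rho> \<sigma> \<longleftrightarrow>
     (\<exists>ts::nat \<Rightarrow> real. filterlim ts at_top sequentially \<and> state_conv (\<lambda>k. \<rho> (ts k)) \<sigma>)"

end

theory Submission
  imports Defs
begin

text \<open>The Lindblad flow preserves self-adjointness and trace (linear ODE arguments) and positivity
  (a first-touching-time argument). By duality with the generator \<open>\<G>\<close>, \<open>f(t) = tr (V \<rho>\<^sub>t)\<close> has
  \<open>f' = tr (\<G>(V) \<rho>\<^sub>t) \<le> 0\<close>, so it decreases to some \<open>a \<ge> 0\<close>, and every limit point \<open>\<sigma>\<close> of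
  the trajectory is a density state with \<open>tr (V \<sigma>) = a\<close>. If \<open>a > 0\<close>, then \<open>g(t) = tr (V\<^sup>2 \<rho>\<^sub>t)\<close>
  satisfies \<open>g' = tr (\<D>(V) \<rho>\<^sub>t) + tr ((\<G>(V) V + V \<G>(V)) \<rho>\<^sub>t) \<ge> c a + s \<parallel>\<G>(V)\<parallel> f' - \<parallel>V\<parallel>\<^sup>2 / s\<close>
  for every \<open>s > 0\<close>, so \<open>g - s \<parallel>\<G>(V)\<parallel> f\<close> grows linearly although \<open>g \<le> \<parallel>V\<parallel>\<^sup>2\<close>.\<close>

section \<open>Matrix algebra on \<open>\<complex>\<^sup>n\<close>\<close>

definition cinner :: "complex^'n::finite \<Rightarrow> complex^'n \<Rightarrow> complex" where
  "cinner y x = (\<Sum>i\<in>UNIV. cnj (y$i) * x$i)"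

definition qform :: "'n::finite op \<Rightarrow> complex^'n \<Rightarrow> complex" where
  "qform A x = cinner x (A *v x)"

definition outer :: "complex^'n::finite \<Rightarrow> 'n op" where
  "outer u = (\<chi> i j. u$i * cnj (u$j))"

lemma psd_iff_qform: "psd A \<longleftrightarrow> self_adjoint A \<and> (\<forall>x. 0 \<le> Re (qform A x))"
  by (simp add: psd_def qform_def cinner_def)

lemma adj_component [simp]: "adj A $ i $ j = cnj (A $ j $ i)"
  by (simp add: adj_def)

lemma smult_op_component [simp]: "smult_op c A $ i $ j = c * A $ i $ j"
  by (simp add: smult_op_def)

lemma adj_adj [simp]: "adj (adj A) = A"
  by (simp add: vec_eq_iff)

lemma adj_add [simp]: "adj (A + B) = adj A + adj B"
  by (simp add: vec_eq_iff)

lemma adj_diff [simp]: "adj (A - B) = adj A - adj B"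
  by (simp add: vec_eq_iff)

lemma adj_smult_op [simp]: "adj (smult_op c A) = smult_op (cnj c) (adj A)"
  by (simp add: vec_eq_iff)

lemma adj_matrix_mult [simp]: "adj (A ** B) = adj B ** adj A"
  by (simp add: vec_eq_iff matrix_matrix_mult_def mult.commute)

lemma adj_mat_1 [simp]: "adj (mat 1) = mat 1"
  by (simp add: vec_eq_iff mat_def)

lemma self_adjoint_component: "self_adjoint A \<Longrightarrow> A $ j $ i = cnj (A $ i $ j)"
  by (metis adj_component self_adjoint_def)

lemma smult_op_matrix_mult_left [simp]: "smult_op c A ** B = smult_op c (A ** B)"
  by (simp add: vec_eq_iff matrix_matrix_mult_def sum_distrib_left mult.assoc)

lemma smult_op_matrix_mult_right [simp]: "A ** smult_op c B = smult_op c (A ** B)"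
  by (simp add: vec_eq_iff matrix_matrix_mult_def sum_distrib_left algebra_simps)

lemma smult_op_smult_op [simp]: "smult_op c (smult_op d A) = smult_op (c * d) A"
  by (simp add: vec_eq_iff)

lemma smult_op_add: "smult_op c (A + B) = smult_op c A + smult_op c B"
  by (simp add: vec_eq_iff algebra_simps)

lemma smult_op_diff: "smult_op c (A - B) = smult_op c A - smult_op c B"
  by (simp add: vec_eq_iff algebra_simps)

lemma smult_op_matrix_vector_mult [simp]: "smult_op c A *v x = c *s (A *v x)"
  by (simp add: vec_eq_iff matrix_vector_mult_def sum_distrib_left mult.assoc)

lemma trace_zero [simp]: "trace (0 :: 'n::finite op) = 0"
  by (simp add: trace_def)

lemma trace_smult_op [simp]: "trace (smult_op c A) = c * trace A"
  by (simp add: trace_def sum_distrib_left)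

lemma scaleR_eq_smult_op: "r *\<^sub>R (A::'n::finite op) = smult_op (of_real r) A"
  by (simp add: vec_eq_iff vector_scaleR_component scaleR_conv_of_real[where 'a=complex])

lemma matrix_mult_add_rdistrib: "(A + B) ** C = A ** C + B ** (C::'n::finite op)"
  by (simp add: vec_eq_iff matrix_matrix_mult_def distrib_right sum.distrib)

lemma matrix_mult_diff_rdistrib: "(A - B) ** C = A ** C - B ** (C::'n::finite op)"
  by (simp add: vec_eq_iff matrix_matrix_mult_def left_diff_distrib sum_subtractf)

lemma matrix_mult_diff_ldistrib: "C ** (A - B) = C ** A - C ** (B::'n::finite op)"
  by (simp add: vec_eq_iff matrix_matrix_mult_def right_diff_distrib sum_subtractf)

lemma bounded_linear_op:
  fixes f :: "'n::finite op \<Rightarrow> 'b::real_normed_vector"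
  assumes "\<And>A B. f (A + B) = f A + f B"
    and "\<And>r A. f (smult_op (of_real r) A) = r *\<^sub>R f A"
  shows "bounded_linear f"
  using assms by (intro linear_conv_bounded_linear[THEN iffD1] linearI)
    (simp_all add: scaleR_eq_smult_op)

lemma matrix_vector_mult_bounded: "\<exists>K>0. \<forall>x. norm (A *v x) \<le> K * norm (x::complex^'n::finite)"
proof -
  have "bounded_linear ((*v) A)" by simp
  then show ?thesis by (metis bounded_linear.pos_bounded mult.commute)
qed

section \<open>The inner product and quadratic forms\<close>

lemma cinner_adj: "cinner y (A *v x) = cinner (adj A *v y) x"
  unfolding cinner_def matrix_vector_mult_def
  by (simp add: sum_distrib_left sum_distrib_right, subst sum.swap) (simp add: algebra_simps)

lemma cnj_cinner: "cnj (cinner y x) = cinner x y"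
  by (simp add: cinner_def mult.commute)

lemma cinner_add_right: "cinner y (x + z) = cinner y x + cinner y z"
  by (simp add: cinner_def algebra_simps sum.distrib)

lemma cinner_diff_right: "cinner y (x - z) = cinner y x - cinner y z"
  by (simp add: cinner_def algebra_simps sum_subtractf)

lemma cinner_diff_left: "cinner (y - w) x = cinner y x - cinner w x"
  by (simp add: cinner_def algebra_simps sum_subtractf)

lemma cinner_scale_right: "cinner y (c *s x) = c * cinner y x"
  by (simp add: cinner_def sum_distrib_left algebra_simps)

lemma cinner_scale_left: "cinner (c *s y) x = cnj c * cinner y x"
  by (simp add: cinner_def sum_distrib_left algebra_simps)

lemma Re_cinner: "Re (cinner x y) = inner x y"
  by (simp add: cinner_def inner_vec_def inner_complex_def Re_sum)

lemma cinner_self: "cinner x x = of_real ((norm x)\<^sup>2)"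
proof -
  have "Im (cinner x x) = 0"
    by (simp add: cinner_def Im_sum algebra_simps)
  moreover have "Re (cinner x x) = (norm x)\<^sup>2"
    by (simp add: Re_cinner power2_norm_eq_inner)
  ultimately show ?thesis by (simp add: complex_eq_iff)
qed

lemma cinner_axis_left: "cinner (axis i 1) x = x $ i"
proof -
  have "cinner (axis i 1) x = (\<Sum>j\<in>UNIV. if j = i then x$j else 0)"
    unfolding cinner_def by (intro sum.cong) (auto simp: axis_def)
  then show ?thesis by simp
qed

lemma self_adjoint_cinner: "self_adjoint A \<Longrightarrow> cinner y (A *v x) = cinner (A *v y) x"
  by (simp add: cinner_adj self_adjoint_def)

lemma qform_add: "qform (A + B) x = qform A x + qform B x"
  by (simp add: qform_def matrix_vector_mult_add_rdistrib cinner_add_right)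

lemma qform_diff: "qform (A - B) x = qform A x - qform B x"
  by (simp add: qform_def matrix_vector_mult_diff_rdistrib cinner_diff_right)

lemma qform_smult_op: "qform (smult_op c A) x = c * qform A x"
  by (simp add: qform_def cinner_scale_right)

lemma qform_zero [simp]: "qform 0 x = 0"
  by (simp add: qform_def cinner_def)

lemma qform_mat_1 [simp]: "qform (mat 1) x = of_real ((norm x)\<^sup>2)"
  by (simp add: qform_def cinner_self)

lemma qform_scaleR: "qform A (r *\<^sub>R x) = of_real (r\<^sup>2) * qform A x"
proof -
  have "r *\<^sub>R x = of_real r *s x"
    by (simp add: vec_eq_iff scaleR_conv_of_real[where 'a=complex])
  then show ?thesis
    by (simp add: qform_def vec.scale cinner_scale_left cinner_scale_right power2_eq_square)
qed

lemma matrix_vector_mult_axis: "(A *v axis j 1) $ i = A $ i $ j"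
  by (simp add: matrix_vector_mult_def axis_def if_distrib cong: if_cong)

lemma qform_axis: "qform A (axis i 1) = A $ i $ i"
  by (simp add: qform_def cinner_axis_left matrix_vector_mult_axis)

lemma self_adjoint_qform_real: "self_adjoint A \<Longrightarrow> Im (qform A x) = 0"
  by (metis cnj_cinner self_adjoint_cinner qform_def Reals_cnj_iff complex_is_Real_iff)

lemma self_adjoint_qform_of_real: "self_adjoint A \<Longrightarrow> qform A x = of_real (Re (qform A x))"
  by (simp add: complex_eq_iff self_adjoint_qform_real)

lemma bounded_bilinear_matrix_vector_mult:
  "bounded_bilinear (\<lambda>(A::'n::finite op) (y::complex^'n). A *v y)"
proof (rule bilinear_conv_bounded_bilinear[THEN iffD1])
  show "bilinear (\<lambda>(A::'n op) (y::complex^'n). A *v y)"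
    unfolding bilinear_def
    by (auto intro!: linearI simp: matrix_vector_mult_add_rdistrib matrix_vector_right_distrib
        vec_eq_iff matrix_vector_mult_def scaleR_sum_right distrib_right sum.distrib)
qed

lemma qform_norm_bound: "\<exists>K\<ge>0. \<forall>(A::'n::finite op) y. \<bar>Re (qform A y)\<bar> \<le> K * norm A * (norm y)\<^sup>2"
proof -
  obtain K where K: "K > 0" "\<And>(A::'n op) y. norm (A *v y) \<le> norm A * norm y * K"
    using bounded_bilinear.pos_bounded[OF bounded_bilinear_matrix_vector_mult] by blast
  have "\<bar>Re (qform A y)\<bar> \<le> K * norm A * (norm y)\<^sup>2" for A :: "'n op" and y
  proof -
    have "\<bar>Re (qform A y)\<bar> \<le> norm y * norm (A *v y)"
      unfolding qform_def Re_cinner by (rule Cauchy_Schwarz_ineq2)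
    also have "\<dots> \<le> norm y * (norm A * norm y * K)"
      by (intro mult_left_mono K(2)) simp
    finally show ?thesis by (simp add: power2_eq_square algebra_simps)
  qed
  then show ?thesis using K(1) by (intro exI[of _ K]) auto
qed

lemma bounded_linear_Re_qform: "bounded_linear (\<lambda>A. Re (qform A x))"
  by (rule bounded_linear_op) (simp_all add: qform_add qform_smult_op)

lemma qform_attains_min_on_sphere:
  "\<exists>x0. norm x0 = 1 \<and> (\<forall>y. norm y = 1 \<longrightarrow> Re (qform A x0) \<le> Re (qform A (y::complex^'n::finite)))"
proof -
  have "continuous_on (sphere 0 1) (\<lambda>y. Re (qform A y))"
    unfolding qform_def Re_cinner by (intro continuous_intros)
  moreover have "axis undefined 1 \<in> sphere (0::complex^'n) 1"
    by (simp add: norm_axis_1)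
  ultimately show ?thesis
    using continuous_attains_inf[OF compact_sphere, of 0 1 "\<lambda>y. Re (qform A y)"] by auto
qed

lemma qform_ge_of_sphere_bound:
  assumes "\<And>u. norm u = 1 \<Longrightarrow> m \<le> Re (qform A u)"
  shows "m * (norm y)\<^sup>2 \<le> Re (qform A y)"
proof (cases "y = 0")
  case True
  then show ?thesis by (simp add: qform_def cinner_def)
next
  case False
  define u where "u = (1 / norm y) *\<^sub>R y"
  have "norm y *\<^sub>R u = y" and "norm u = 1"
    using False by (simp_all add: u_def)
  then have "Re (qform A y) = (norm y)\<^sup>2 * Re (qform A u)"
    using qform_scaleR[of A "norm y" u] by simp
  then show ?thesis
    using mult_right_mono[OF assms[OF \<open>norm u = 1\<close>], of "(norm y)\<^sup>2"] by (simp add: mult.commute)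
qed

section \<open>Positive semidefinite matrices\<close>

lemma quadratic_nonneg_bound:
  fixes a m q :: real
  assumes nonneg: "\<And>t. 0 \<le> a - 2*t*m + t*t*m*q" and "m \<ge> 0" "q \<ge> 0"
  shows "m \<le> a * q"
proof (cases "q = 0")
  case True
  show ?thesis
  proof (rule ccontr)
    assume "\<not> m \<le> a * q"
    then have m: "m > 0" using True by simp
    have "0 \<le> a - 2*((a+1)/(2*m))*m" using nonneg[of "(a+1)/(2*m)"] True by simp
    also have "\<dots> = -1" using m by (simp add: field_simps)
    finally show False by simp
  qed
next
  case False
  then have q: "q > 0" using assms by simp
  have "0 \<le> a - 2*(1/q)*m + (1/q)*(1/q)*m*q" by (rule nonneg)
  also have "\<dots> = a - m/q" using q by (simp add: field_simps)
  finally show ?thesis using q by (simp add: field_simps)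
qed

text \<open>The discriminant argument, applied to \<open>x - t\<langle>y, A x\<rangle> y\<close> for real \<open>t\<close>.\<close>

lemma psd_cauchy_schwarz:
  assumes "psd A"
  shows "(cmod (cinner y (A *v x)))\<^sup>2 \<le> Re (qform A x) * Re (qform A y)"
proof -
  have sa: "self_adjoint A" and pos: "\<And>z. 0 \<le> Re (qform A z)"
    using assms by (auto simp: psd_iff_qform)
  define b where "b = cinner y (A *v x)"
  have cb: "cinner x (A *v y) = cnj b"
    unfolding b_def by (simp add: self_adjoint_cinner[OF sa] cnj_cinner)
  have "0 \<le> Re (qform A x) - 2*t*(cmod b)\<^sup>2 + t*t*(cmod b)\<^sup>2 * Re (qform A y)" for t :: real
  proof -
    define l where "l = of_real t * b"
    have "qform A (x - l *s y) = qform A x - l * cnj b - cnj l * b + l * cnj l * qform A y"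
      unfolding qform_def
      by (simp add: matrix_vector_mult_diff_distrib vec.scale cinner_diff_left cinner_diff_right
          cinner_scale_left cinner_scale_right cb b_def[symmetric] algebra_simps)
    also have "\<dots> = of_real (Re (qform A x) - 2*t*(cmod b)\<^sup>2 + t*t*(cmod b)\<^sup>2 * Re (qform A y))"
      unfolding cmod_power2 by (subst (1 2) self_adjoint_qform_of_real[OF sa])
        (simp add: l_def complex_eq_iff algebra_simps power2_eq_square)
    finally show ?thesis using pos[of "x - l *s y"] by simp
  qed
  then have "(cmod b)\<^sup>2 \<le> Re (qform A x) * Re (qform A y)"
    by (intro quadratic_nonneg_bound) (auto simp: pos)
  then show ?thesis by (simp add: b_def)
qed

lemma psd_qform_zero_imp_kernel:
  assumes "psd A" "Re (qform A x) = 0"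
  shows "A *v x = 0"
proof -
  have "(cmod (cinner (A *v x) (A *v x)))\<^sup>2 \<le> 0"
    using psd_cauchy_schwarz[OF assms(1), of "A *v x" x] assms(2) by simp
  then show ?thesis by (simp add: cinner_self)
qed

lemma psd_norm_square_le:
  assumes "psd P" "\<And>y. norm (P *v y) \<le> K * norm y"
  shows "(norm (P *v x))\<^sup>2 \<le> K * Re (qform P x)"
proof -
  have pos: "\<And>z. 0 \<le> Re (qform P z)" using assms by (auto simp: psd_iff_qform)
  have K0: "K \<ge> 0"
    using assms(2)[of "axis undefined 1"] norm_ge_zero[of "P *v axis undefined 1"]
    by (simp add: norm_axis_1 del: norm_ge_zero)
  have "((norm (P *v x))\<^sup>2)\<^sup>2 = (cmod (cinner (P *v x) (P *v x)))\<^sup>2"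
    by (simp add: cinner_self norm_power)
  also have "\<dots> \<le> Re (qform P x) * Re (qform P (P *v x))"
    by (rule psd_cauchy_schwarz[OF assms(1)])
  also have "\<dots> \<le> Re (qform P x) * (K * (norm (P *v x))\<^sup>2)"
  proof (rule mult_left_mono[OF _ pos])
    have "Re (qform P (P *v x)) \<le> norm (P *v x) * norm (P *v (P *v x))"
      unfolding qform_def Re_cinner by (rule norm_cauchy_schwarz)
    also have "\<dots> \<le> norm (P *v x) * (K * norm (P *v x))"
      by (intro mult_left_mono assms(2)) simp
    finally show "Re (qform P (P *v x)) \<le> K * (norm (P *v x))\<^sup>2"
      by (simp add: power2_eq_square algebra_simps)
  qed
  finally have h: "(norm (P *v x))\<^sup>2 * (norm (P *v x))\<^sup>2 \<le> (K * Re (qform P x)) * (norm (P *v x))\<^sup>2"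
    by (metis mult.assoc mult.commute power2_eq_square)
  show ?thesis
  proof (cases "P *v x = 0")
    case True
    then show ?thesis using pos[of x] K0 by simp
  next
    case False
    then show ?thesis by (intro mult_right_le_imp_le[OF h]) simp
  qed
qed

lemma qform_anticommutator_lower_bound:
  assumes "self_adjoint V" "self_adjoint G" "psd (- G)"
    and KG: "\<And>y. norm (G *v y) \<le> KG * norm y" and KV: "\<And>y. norm (V *v y) \<le> KV * norm y"
    and "s > 0"
  shows "s * KG * Re (qform G u) - KV\<^sup>2 / s * (norm u)\<^sup>2 \<le> Re (qform (G ** V + V ** G) u)"
proof -
  define a b where "a = norm (G *v u)" and "b = norm (V *v u)"
  have "qform (G ** V) u = cinner (G *v u) (V *v u)"
    and "qform (V ** G) u = cinner (V *v u) (G *v u)"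
    using assms(1,2) by (simp_all add: qform_def self_adjoint_cinner matrix_vector_mul_assoc[symmetric])
  then have "Re (qform (G ** V + V ** G) u) = 2 * inner (G *v u) (V *v u)"
    by (simp add: qform_add Re_cinner inner_commute)
  also have "\<dots> \<ge> - 2 * (a * b)"
    using Cauchy_Schwarz_ineq2[of "G *v u" "V *v u"] by (simp add: a_def b_def)
  finally have "- 2 * (a * b) \<le> Re (qform (G ** V + V ** G) u)" .
  moreover have "2 * (a * b) \<le> s * a\<^sup>2 + b\<^sup>2 / s"
  proof -
    have "0 \<le> (s * a - b)\<^sup>2 / s" using \<open>s > 0\<close> by simp
    also have "\<dots> = s * a\<^sup>2 - 2 * (a * b) + b\<^sup>2 / s"
      using \<open>s > 0\<close> by (simp add: power2_eq_square field_simps)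
    finally show ?thesis by simp
  qed
  moreover have "a\<^sup>2 \<le> - KG * Re (qform G u)"
  proof -
    have neg: "(- G) *v y = - (G *v y)" for y
      by (simp add: vec_eq_iff matrix_vector_mult_def sum_negf)
    then have "qform (- G) u = - qform G u"
      by (simp add: qform_def cinner_def sum_negf)
    then show ?thesis
      using psd_norm_square_le[OF assms(3), of KG u] KG by (simp add: a_def neg)
  qed
  moreover have "b\<^sup>2 \<le> KV\<^sup>2 * (norm u)\<^sup>2"
    using KV[of u] by (simp add: b_def power_mono flip: power_mult_distrib)
  ultimately show ?thesis
    using \<open>s > 0\<close> mult_left_mono[of "a\<^sup>2" "- KG * Re (qform G u)" s]
      divide_right_mono[of "b\<^sup>2" "KV\<^sup>2 * (norm u)\<^sup>2" s]
    by (simp add: algebra_simps)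
qed

lemma outer_matrix_vector_mult: "outer w *v x = cinner w x *s w"
  by (simp add: vec_eq_iff matrix_vector_mult_def outer_def cinner_def sum_distrib_left
      sum_distrib_right ac_simps)

lemma qform_outer: "qform (outer w) x = of_real ((cmod (cinner w x))\<^sup>2)"
  unfolding qform_def outer_matrix_vector_mult cinner_scale_right complex_norm_square
  by (simp add: cnj_cinner)

lemma self_adjoint_outer: "self_adjoint (outer w)"
  by (simp add: self_adjoint_def vec_eq_iff outer_def)

lemma trace_matrix_mult_outer: "trace (A ** outer u) = qform A u"
  unfolding trace_def outer_def matrix_matrix_mult_def qform_def cinner_def matrix_vector_mult_def
  by (simp add: sum_distrib_left) (simp add: ac_simps)

lemma psd_zero_diagonal:
  assumes "psd \<rho>" "\<rho> $ a $ a = 0"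
  shows "\<rho> $ i $ a = 0" "\<rho> $ a $ i = 0"
proof -
  have "(cmod (\<rho> $ i $ a))\<^sup>2 \<le> Re (\<rho> $ i $ i) * Re (\<rho> $ a $ a)"
    using psd_cauchy_schwarz[OF assms(1), of "axis i 1" "axis a 1"]
    by (simp add: cinner_axis_left qform_axis matrix_vector_mult_axis mult.commute)
  then show "\<rho> $ i $ a = 0" using assms(2) by simp
  moreover have "self_adjoint \<rho>" using assms(1) by (simp add: psd_iff_qform)
  ultimately show "\<rho> $ a $ i = 0" by (simp add: self_adjoint_component[of \<rho> a i])
qed

text \<open>One step of a Cholesky-type decomposition.\<close>

lemma psd_minus_outer_column:
  assumes psd: "psd \<rho>" and r: "Re (\<rho> $ a $ a) > 0"
  defines "w \<equiv> \<chi> i. \<rho> $ i $ a / of_real (sqrt (Re (\<rho> $ a $ a)))"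
  shows "psd (\<rho> - outer w)"
    and "(\<rho> - outer w) $ i $ j = \<rho> $ i $ j - \<rho> $ i $ a * \<rho> $ a $ j / \<rho> $ a $ a"
proof -
  define r where "r = Re (\<rho> $ a $ a)"
  have sa: "self_adjoint \<rho>" using psd by (simp add: psd_iff_qform)
  have raa: "\<rho> $ a $ a = of_real r"
    using self_adjoint_qform_of_real[OF sa, of "axis a 1"] by (simp add: qform_axis r_def)
  have cc: "cnj (\<rho> $ j $ a) = \<rho> $ a $ j" for j
    using self_adjoint_component[OF sa, of a j] by simp
  have sqr: "of_real (sqrt r) * of_real (sqrt r) = (of_real r :: complex)"
    using r by (simp add: r_def flip: of_real_mult)
  have "outer w $ i $ j = \<rho> $ i $ a * cnj (\<rho> $ j $ a) / (of_real (sqrt r) * of_real (sqrt r))"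
    unfolding outer_def w_def r_def vec_lambda_beta
    by (simp only: complex_cnj_divide complex_cnj_complex_of_real times_divide_times_eq)
  then show "(\<rho> - outer w) $ i $ j = \<rho> $ i $ j - \<rho> $ i $ a * \<rho> $ a $ j / \<rho> $ a $ a"
    by (simp add: sqr cc raa)
  have cinner_w: "cinner w x = (\<rho> *v x) $ a / of_real (sqrt r)" for x
    by (simp add: cinner_def w_def r_def matrix_vector_mult_def sum_divide_distrib cc)
  have "(cmod (cinner w x))\<^sup>2 \<le> Re (qform \<rho> x)" for x
  proof -
    have "(cmod (cinner w x))\<^sup>2 = (cmod (cinner (axis a 1) (\<rho> *v x)))\<^sup>2 / r"
      using r by (simp add: cinner_w cinner_axis_left norm_divide power_divide r_def)
    also have "\<dots> \<le> Re (qform \<rho> x) * Re (qform \<rho> (axis a 1)) / r"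
      using r by (intro divide_right_mono psd_cauchy_schwarz[OF psd]) (simp add: r_def)
    also have "\<dots> = Re (qform \<rho> x)" using r by (simp add: qform_axis r_def)
    finally show ?thesis .
  qed
  moreover have "self_adjoint (\<rho> - outer w)"
    using sa self_adjoint_outer[of w] by (simp add: self_adjoint_def)
  moreover have "Re (qform (\<rho> - outer w) x) = Re (qform \<rho> x) - (cmod (cinner w x))\<^sup>2" for x
    by (simp add: qform_diff qform_outer)
  ultimately show "psd (\<rho> - outer w)"
    by (simp add: psd_iff_qform)
qed

lemma psd_eq_sum_outer_on:
  assumes "finite S" "psd \<rho>" "\<And>i j. i \<notin> S \<or> j \<notin> S \<Longrightarrow> \<rho> $ i $ j = 0"
  shows "\<exists>u. \<rho> = (\<Sum>k\<in>S. outer (u k))"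
  using assms
proof (induction S arbitrary: \<rho> rule: finite_induct)
  case empty
  then show ?case by (simp add: vec_eq_iff)
next
  case (insert a S)
  have supp: "\<rho> $ i $ j = 0" if "i \<notin> insert a S \<or> j \<notin> insert a S" for i j
    using insert.prems(2) that by blast
  have upd: "(\<Sum>k\<in>insert a S. outer ((u(a := v)) k)) = outer v + (\<Sum>k\<in>S. outer (u k))" for u v
  proof -
    have "(\<Sum>k\<in>S. outer ((u(a := v)) k)) = (\<Sum>k\<in>S. outer (u k))"
      using insert.hyps(2) by (intro sum.cong) auto
    then show ?thesis using insert.hyps by simp
  qed
  show ?case
  proof (cases "Re (\<rho> $ a $ a) > 0")
    case False
    have sa: "self_adjoint \<rho>" and "0 \<le> Re (\<rho> $ a $ a)"
      using insert.prems(1) qform_axis[of \<rho> a] unfolding psd_iff_qform by metis+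
    then have "\<rho> $ a $ a = 0"
      using False self_adjoint_qform_of_real[OF sa, of "axis a 1"] by (simp add: qform_axis)
    then have "\<rho> $ i $ j = 0" if "i \<notin> S \<or> j \<notin> S" for i j
      using that supp psd_zero_diagonal[OF insert.prems(1)] by (metis insertE)
    then have "\<exists>u. \<rho> = (\<Sum>k\<in>S. outer (u k))"
      by (rule insert.IH[OF insert.prems(1)])
    then obtain u where u: "\<rho> = (\<Sum>k\<in>S. outer (u k))" ..
    have "outer 0 = 0" by (simp add: vec_eq_iff outer_def)
    with u upd[of u 0] show ?thesis by (intro exI[of _ "u(a := 0)"]) simp
  next
    case True
    define w where "w = (\<chi> i. \<rho> $ i $ a / of_real (sqrt (Re (\<rho> $ a $ a))))"
    note w = psd_minus_outer_column[OF insert.prems(1) True, folded w_def]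
    have "\<rho> $ a $ a \<noteq> 0" using True by auto
    then have "(\<rho> - outer w) $ i $ j = 0" if "i \<notin> S \<or> j \<notin> S" for i j
      unfolding w(2) using that supp[of i j] supp[of i a] supp[of a j] insert.hyps(2)
      by (cases "i = a \<or> j = a") auto
    then have "\<exists>u. \<rho> - outer w = (\<Sum>k\<in>S. outer (u k))"
      by (rule insert.IH[OF w(1)])
    then obtain u where u: "\<rho> - outer w = (\<Sum>k\<in>S. outer (u k))" ..
    with upd[of u w] show ?thesis by (intro exI[of _ "u(a := w)"]) (simp add: algebra_simps)
  qed
qed

lemma trace_matrix_mult_sum: "trace ((X::'n::finite op) ** sum f S) = (\<Sum>k\<in>S. trace (X ** f k))"
  by (induction S rule: infinite_finite_induct)
    (simp_all add: matrix_add_ldistrib trace_add)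

lemma psd_trace_eq_sum_qform:
  assumes "psd (\<rho>::'n::finite op)"
  obtains u where "\<And>X. trace (X ** \<rho>) = (\<Sum>k\<in>(UNIV::'n set). qform X (u k))"
proof -
  have "\<exists>u. \<rho> = (\<Sum>k\<in>(UNIV::'n set). outer (u k))"
    by (rule psd_eq_sum_outer_on[OF _ assms]) simp_all
  then obtain u where "\<rho> = (\<Sum>k\<in>(UNIV::'n set). outer (u k))" ..
  then show ?thesis
    using that by (simp add: trace_matrix_mult_sum trace_matrix_mult_outer)
qed

lemma Re_trace_mono_psd:
  fixes \<rho> :: "'n::finite op"
  assumes "psd \<rho>" "\<And>u. Re (qform A u) \<le> Re (qform B u)"
  shows "Re (trace (A ** \<rho>)) \<le> Re (trace (B ** \<rho>))"
proof -
  obtain u where "\<And>X. trace (X ** \<rho>) = (\<Sum>k\<in>(UNIV::'n set). qform X (u k))"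
    using psd_trace_eq_sum_qform[OF assms(1)] by blast
  then show ?thesis by (simp add: sum_mono assms(2))
qed

lemma loewner_le_qform: "loewner_le A B \<Longrightarrow> Re (qform A u) \<le> Re (qform B u)"
  by (simp add: loewner_le_def psd_iff_qform qform_diff)

lemma Im_trace_self_adjoint_psd:
  fixes \<rho> :: "'n::finite op"
  assumes "self_adjoint A" "psd \<rho>"
  shows "Im (trace (A ** \<rho>)) = 0"
proof -
  obtain u where "\<And>X. trace (X ** \<rho>) = (\<Sum>k\<in>(UNIV::'n set). qform X (u k))"
    using psd_trace_eq_sum_qform[OF assms(2)] by blast
  then show ?thesis by (simp add: Im_sum self_adjoint_qform_real[OF assms(1)])
qed

section \<open>The Lindblad generator\<close>

lemma lindblad_add: "lindblad H L (A + B) = lindblad H L A + lindblad H L B"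
  by (simp add: lindblad_def matrix_add_ldistrib matrix_mult_add_rdistrib smult_op_add
      smult_op_diff algebra_simps)

lemma lindblad_diff: "lindblad H L (A - B) = lindblad H L A - lindblad H L B"
  using lindblad_add[of H L "A - B" B] by (simp add: algebra_simps)

lemma lindblad_smult_op: "lindblad H L (smult_op c A) = smult_op c (lindblad H L A)"
  by (simp add: lindblad_def smult_op_add smult_op_diff mult.commute)

lemma bounded_linear_lindblad: "bounded_linear (lindblad H L)"
  by (rule bounded_linear_op) (simp_all add: lindblad_add lindblad_smult_op scaleR_eq_smult_op)

lemma adj_lindblad:
  assumes "self_adjoint H"
  shows "adj (lindblad H L A) = lindblad H L (adj A)"
proof -
  have "smult_op \<i> (X - Y) = smult_op (-\<i>) (Y - X)" for X Y :: "'a::finite op"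
    by (simp add: vec_eq_iff algebra_simps)
  then show ?thesis
    using assms by (simp add: lindblad_def self_adjoint_def matrix_mul_assoc)
qed

lemma trace_lindblad: "trace (lindblad H L A) = 0"
proof -
  have "trace (L ** A ** adj L) = trace (adj L ** L ** A)"
    and "trace (A ** adj L ** L) = trace (adj L ** L ** A)"
    by (metis trace_mul_sym matrix_mul_assoc)+
  then show ?thesis
    by (simp add: lindblad_def trace_add trace_sub trace_mul_sym[of H A] algebra_simps)
qed

lemma trace_matrix_mult_lindblad:
  assumes "H ** X = X ** H"
  shows "trace (X ** lindblad H L A) = trace (gen L X ** A)"
proof -
  have "trace (X ** (A ** H)) = trace (X ** (H ** A))"
    by (metis assms trace_mul_sym matrix_mul_assoc)
  moreover have "trace (X ** (L ** A ** adj L)) = trace (adj L ** X ** L ** A)"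
    and "trace (X ** (adj L ** L ** A)) = trace (X ** adj L ** L ** A)"
    and "trace (X ** (A ** adj L ** L)) = trace (adj L ** L ** X ** A)"
    by (metis trace_mul_sym matrix_mul_assoc)+
  ultimately show ?thesis
    unfolding lindblad_def gen_def
    by (simp add: matrix_add_ldistrib matrix_mult_diff_ldistrib matrix_mult_add_rdistrib
        matrix_mult_diff_rdistrib trace_add trace_sub algebra_simps)
qed

lemma gen_square:
  assumes "self_adjoint V"
  shows "gen L (V ** V) = dissip L V + gen L V ** V + V ** gen L V"
  using assms by (simp add: dissip_def self_adjoint_def)

lemma Re_trace_square_le:
  assumes "self_adjoint V" "\<And>y. norm (V *v y) \<le> K * norm y" "density_state \<rho>"
  shows "Re (trace ((V ** V) ** \<rho>)) \<le> K\<^sup>2"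
proof -
  have "Re (qform (V ** V) u) \<le> Re (qform (smult_op (of_real (K\<^sup>2)) (mat 1)) u)" for u
  proof -
    have "Re (qform (V ** V) u) = (norm (V *v u))\<^sup>2"
      by (simp add: qform_def self_adjoint_cinner[OF assms(1)] matrix_vector_mul_assoc[symmetric]
          cinner_self)
    also have "\<dots> \<le> K\<^sup>2 * (norm u)\<^sup>2"
      using assms(2)[of u] by (simp add: power_mono flip: power_mult_distrib)
    finally show ?thesis by (simp add: qform_smult_op del: of_real_power)
  qed
  moreover have "psd \<rho>" "trace \<rho> = 1" using assms(3) by (simp_all add: density_state_def)
  ultimately show ?thesis
    using Re_trace_mono_psd[of \<rho> "V ** V" "smult_op (of_real (K\<^sup>2)) (mat 1)"]
    by (simp del: of_real_power)
qed

lemma Re_trace_gen_square_lower_bound: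
  assumes sV: "self_adjoint V" and "loewner_le (gen L V) 0"
    and bound: "loewner_le (smult_op (of_real c) V) (dissip L V)"
    and KG: "\<And>y. norm (gen L V *v y) \<le> KG * norm y" and KV: "\<And>y. norm (V *v y) \<le> KV * norm y"
    and "s > 0" and \<rho>: "density_state \<rho>"
  shows "c * Re (trace (V ** \<rho>)) + s * KG * Re (trace (gen L V ** \<rho>)) - KV\<^sup>2 / s
    \<le> Re (trace (gen L (V ** V) ** \<rho>))"
proof -
  define G where "G = gen L V"
  have sG: "self_adjoint G" and pG: "psd (- G)"
    using \<open>loewner_le (gen L V) 0\<close> by (auto simp: loewner_le_def G_def)
  define A where "A = smult_op (of_real c) V + smult_op (of_real (s * KG)) G
    - smult_op (of_real (KV\<^sup>2 / s)) (mat 1)"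
  have "Re (qform A u) \<le> Re (qform (gen L (V ** V)) u)" for u
  proof -
    have "Re (qform A u) = c * Re (qform V u) + s * KG * Re (qform G u) - KV\<^sup>2 / s * (norm u)\<^sup>2"
      by (simp add: A_def qform_add qform_diff qform_smult_op del: of_real_mult of_real_divide)
    moreover have "Re (qform (gen L (V ** V)) u)
        = Re (qform (dissip L V) u) + Re (qform (G ** V + V ** G) u)"
      by (simp add: gen_square[OF sV] qform_add G_def)
    moreover have "c * Re (qform V u) \<le> Re (qform (dissip L V) u)"
      using loewner_le_qform[OF bound, of u] by (simp add: qform_smult_op)
    ultimately show ?thesis
      using qform_anticommutator_lower_bound[OF sV sG pG KG[folded G_def] KV \<open>s > 0\<close>, of u]
      by linarith
  qed
  moreover have "psd \<rho>" "trace \<rho> = 1" using \<rho> by (simp_all add: density_state_def)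
  ultimately show ?thesis
    using Re_trace_mono_psd[of \<rho> A "gen L (V ** V)"]
    by (simp add: A_def G_def matrix_mult_add_rdistrib matrix_mult_diff_rdistrib
        trace_add trace_sub del: of_real_mult of_real_divide)
qed

lemma qform_lindblad_eigenvector:
  assumes sa: "self_adjoint \<rho>" and ev: "\<rho> *v x = of_real c *s x"
  shows "Re (qform (lindblad H L \<rho>) x) = Re (qform \<rho> (adj L *v x)) - c * (norm (L *v x))\<^sup>2"
proof -
  have \<rho>_left: "cinner x (\<rho> *v y) = of_real c * cinner x y" for y
    using self_adjoint_cinner[OF sa] by (simp add: ev cinner_scale_left)
  have LL: "cinner x (adj L *v (L *v x)) = of_real ((norm (L *v x))\<^sup>2)"
    by (simp add: cinner_adj cinner_self)
  have "qform (lindblad H L \<rho>) x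
      = - \<i> * (cinner x (H *v (\<rho> *v x)) - cinner x (\<rho> *v (H *v x)))
        + cinner x (L *v (\<rho> *v (adj L *v x)))
        - 1/2 * cinner x (adj L *v (L *v (\<rho> *v x))) - 1/2 * cinner x (\<rho> *v (adj L *v (L *v x)))"
    by (simp add: qform_def lindblad_def matrix_vector_mult_diff_rdistrib
        matrix_vector_mult_add_rdistrib cinner_add_right cinner_diff_right cinner_scale_right
        matrix_vector_mul_assoc[symmetric] algebra_simps)
  also have "\<dots> = qform \<rho> (adj L *v x) - of_real ((c * (norm (L *v x))\<^sup>2))"
    by (simp add: \<rho>_left ev vec.scale cinner_scale_right cinner_adj[of x L] LL qform_def)
  finally show ?thesis by simp
qed

text \<open>The jump term contributes \<open>\<langle>L\<^sup>\<dagger>x, \<rho> L\<^sup>\<dagger>x\<rangle> \<ge> -\<delta> \<parallel>L\<^sup>\<dagger>x\<parallel>\<^sup>2\<close>, the anticommutator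
  term \<open>\<delta> \<parallel>L x\<parallel>\<^sup>2 \<ge> 0\<close>.\<close>

lemma qform_lindblad_kernel_lower_bound:
  assumes sa: "self_adjoint \<rho>" and lower: "\<And>y. 0 \<le> Re (qform \<rho> y) + \<delta> * (norm y)\<^sup>2"
    and ev: "\<rho> *v x = of_real (- \<delta>) *s x" and "\<delta> \<ge> 0"
    and KL: "\<And>y. norm (adj L *v y) \<le> KL * norm y"
  shows "- \<delta> * KL\<^sup>2 * (norm x)\<^sup>2 \<le> Re (qform (lindblad H L \<rho>) x)"
proof -
  have "(norm (adj L *v x))\<^sup>2 \<le> KL\<^sup>2 * (norm x)\<^sup>2"
    using KL[of x] by (simp add: power_mono flip: power_mult_distrib)
  from mult_left_mono[OF this \<open>\<delta> \<ge> 0\<close>]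
  have "- \<delta> * KL\<^sup>2 * (norm x)\<^sup>2 \<le> - \<delta> * (norm (adj L *v x))\<^sup>2"
    by (simp add: algebra_simps)
  also have "\<dots> \<le> Re (qform \<rho> (adj L *v x)) + \<delta> * (norm (L *v x))\<^sup>2"
    using lower[of "adj L *v x"] \<open>\<delta> \<ge> 0\<close> by (simp add: add_increasing2)
  also have "\<dots> = Re (qform (lindblad H L \<rho>) x)"
    using qform_lindblad_eigenvector[OF sa ev] by simp
  finally show ?thesis .
qed

section \<open>Differential inequalities on \<open>[0, \<infinity>)\<close>\<close>

lemma bounded_linear_has_real_derivative:
  fixes \<phi> :: "'a::real_normed_vector \<Rightarrow> real"
  assumes "bounded_linear \<phi>" "(\<rho> has_vector_derivative D) (at t within S)"
  shows "((\<lambda>s. \<phi> (\<rho> s)) has_real_derivative \<phi> D) (at t within S)"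
  using bounded_linear.has_vector_derivative[OF assms]
  by (simp add: has_real_derivative_iff_has_vector_derivative)

lemma has_real_derivative_at_interior_nonneg:
  "(f has_real_derivative D) (at t within {0..}) \<Longrightarrow> t > 0 \<Longrightarrow> (f has_real_derivative D) (at t)"
  using at_within_interior[of t "{0::real..}"] by simp

lemma increasing_of_deriv_nonneg:
  fixes f f' :: "real \<Rightarrow> real"
  assumes deriv: "\<And>t. t \<ge> 0 \<Longrightarrow> (f has_real_derivative f' t) (at t within {0..})"
    and nonneg: "\<And>t. t \<ge> 0 \<Longrightarrow> f' t \<ge> 0" and "0 \<le> a" "a \<le> b"
  shows "f a \<le> f b"
proof (rule DERIV_nonneg_imp_increasing_open[OF \<open>a \<le> b\<close>])
  fix x assume "a < x" "x < b"
  then have "x > 0" "x \<ge> 0" using \<open>0 \<le> a\<close> by auto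
  then show "\<exists>y. (f has_real_derivative y) (at x) \<and> y \<ge> 0"
    using has_real_derivative_at_interior_nonneg[OF deriv] nonneg by blast
next
  show "continuous_on {a..b} f"
    unfolding continuous_on_eq_continuous_within
  proof
    fix x assume "x \<in> {a..b}"
    then have "x \<ge> 0" using \<open>0 \<le> a\<close> by simp
    show "continuous (at x within {a..b}) f"
      by (rule continuous_within_subset[OF DERIV_continuous[OF deriv[OF \<open>x \<ge> 0\<close>]]])
        (use \<open>0 \<le> a\<close> in auto)
  qed
qed

lemma linear_growth_of_deriv_ge:
  fixes h h' :: "real \<Rightarrow> real"
  assumes "\<And>t. t \<ge> 0 \<Longrightarrow> (h has_real_derivative h' t) (at t within {0..})"
    and "\<And>t. t \<ge> 0 \<Longrightarrow> h' t \<ge> b" and "t \<ge> 0"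
  shows "h 0 + b * t \<le> h t"
proof -
  have "h 0 - b * 0 \<le> h t - b * t"
  proof (rule increasing_of_deriv_nonneg[of "\<lambda>t. h t - b * t" "\<lambda>t. h' t - b"])
    fix s :: real assume "s \<ge> 0"
    then show "((\<lambda>t. h t - b * t) has_real_derivative h' s - b) (at s within {0..})"
      using assms(1) by (auto intro!: derivative_eq_intros)
  qed (use assms in auto)
  then show ?thesis by simp
qed

lemma gronwall_vanishing:
  fixes g g' :: "real \<Rightarrow> real"
  assumes deriv: "\<And>t. t \<ge> 0 \<Longrightarrow> (g has_real_derivative g' t) (at t within {0..})"
    and bound: "\<And>t. t \<ge> 0 \<Longrightarrow> g' t \<le> M * g t" and "g 0 = 0"
    and nonneg: "\<And>t. g t \<ge> 0" and "t \<ge> 0"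
  shows "g t = 0"
proof -
  have "- (exp (- M * 0) * g 0) \<le> - (exp (- M * t) * g t)"
  proof (rule increasing_of_deriv_nonneg[of "\<lambda>s. - (exp (- M * s) * g s)"
        "\<lambda>s. exp (- M * s) * (M * g s - g' s)"])
    fix s :: real assume s: "s \<ge> 0"
    have "((\<lambda>s. exp (- M * s)) has_real_derivative - M * exp (- M * s)) (at s within {0..})"
      by (auto intro!: derivative_eq_intros)
    from DERIV_minus[OF DERIV_mult[OF this deriv[OF s]]]
    show "((\<lambda>s. - (exp (- M * s) * g s)) has_real_derivative
        exp (- M * s) * (M * g s - g' s)) (at s within {0..})"
      by (rule DERIV_cong) (simp add: algebra_simps)
    show "0 \<le> exp (- M * s) * (M * g s - g' s)"
      using bound[OF s] by simp
  qed (use \<open>t \<ge> 0\<close> in auto)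
  then show ?thesis using \<open>g 0 = 0\<close> nonneg[of t] by (simp add: mult_le_0_iff)
qed

lemma real_induct_nonneg:
  fixes P :: "real \<Rightarrow> bool"
  assumes closed: "\<And>\<tau>. \<tau> \<ge> 0 \<Longrightarrow> (\<And>s. 0 \<le> s \<Longrightarrow> s < \<tau> \<Longrightarrow> P s) \<Longrightarrow> P \<tau>"
    and open_step: "\<And>\<tau>. \<tau> \<ge> 0 \<Longrightarrow> (\<And>s. 0 \<le> s \<Longrightarrow> s \<le> \<tau> \<Longrightarrow> P s) \<Longrightarrow>
        \<exists>d>0. \<forall>s. \<tau> \<le> s \<and> s < \<tau> + d \<longrightarrow> P s"
    and "t \<ge> 0"
  shows "P t"
proof (rule ccontr)
  define B where "B = {s. 0 \<le> s \<and> \<not> P s}"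
  assume "\<not> P t"
  then have ne: "B \<noteq> {}" using \<open>t \<ge> 0\<close> by (auto simp: B_def)
  have bdd: "bdd_below B" by (rule bdd_belowI[of _ 0]) (auto simp: B_def)
  define \<tau> where "\<tau> = Inf B"
  have \<tau>0: "\<tau> \<ge> 0" unfolding \<tau>_def by (rule cInf_greatest[OF ne]) (auto simp: B_def)
  have below: "P s" if "0 \<le> s" "s < \<tau>" for s
  proof (rule ccontr)
    assume "\<not> P s"
    then have "\<tau> \<le> s" unfolding \<tau>_def using that by (intro cInf_lower[OF _ bdd]) (simp add: B_def)
    then show False using that by simp
  qed
  have "P s" if "0 \<le> s" "s \<le> \<tau>" for s
    using closed[OF \<tau>0 below] below[OF that(1)] that(2) by (cases "s = \<tau>") auto
  then obtain d where "d > 0" and d: "\<And>s. \<tau> \<le> s \<Longrightarrow> s < \<tau> + d \<Longrightarrow> P s"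
    using open_step[OF \<tau>0] by meson
  have "\<tau> + d \<le> Inf B"
  proof (rule cInf_greatest[OF ne])
    fix b assume "b \<in> B"
    then have "0 \<le> b" "\<not> P b" by (auto simp: B_def)
    then show "\<tau> + d \<le> b" using below[of b] d[of b] by (meson not_le)
  qed
  then show False using \<open>d > 0\<close> by (simp add: \<tau>_def)
qed

lemma nonneg_of_continuous_from_left:
  fixes f :: "real \<Rightarrow> real"
  assumes "continuous (at \<tau> within {0..}) f" "0 < \<tau>" "\<And>s. 0 \<le> s \<Longrightarrow> s < \<tau> \<Longrightarrow> 0 \<le> f s"
  shows "0 \<le> f \<tau>"
proof (rule tendsto_lowerbound)
  show "(f \<longlongrightarrow> f \<tau>) (at_left \<tau>)"
    using continuous_within_subset[OF assms(1), of "{0..\<tau>}"] at_within_Icc_at_left[OF assms(2)]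
    by (simp add: continuous_within)
  show "eventually (\<lambda>s. 0 \<le> f s) (at_left \<tau>)"
    using eventually_at_left_real[OF assms(2)] by eventually_elim (simp add: assms(3))
qed simp

lemma lower_bound_nonpos_of_growth:
  fixes f g f' g' :: "real \<Rightarrow> real"
  assumes df: "\<And>t. t \<ge> 0 \<Longrightarrow> (f has_real_derivative f' t) (at t within {0..})"
    and dg: "\<And>t. t \<ge> 0 \<Longrightarrow> (g has_real_derivative g' t) (at t within {0..})"
    and g_le: "\<And>t. t \<ge> 0 \<Longrightarrow> g t \<le> B" and "B > 0" "K \<ge> 0" "c > 0"
    and growth: "\<And>t s. t \<ge> 0 \<Longrightarrow> s > 0 \<Longrightarrow> c * f t + s * K * f' t - B / s \<le> g' t"
    and lower: "\<And>t. t \<ge> 0 \<Longrightarrow> a \<le> f t"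
  shows "a \<le> 0"
proof (rule ccontr)
  assume "\<not> a \<le> 0"
  define s where "s = 2 * B / (c * a)"
  have "s > 0" "B / s = c * a / 2"
    using \<open>\<not> a \<le> 0\<close> \<open>B > 0\<close> \<open>c > 0\<close> by (simp_all add: s_def field_simps)
  define h where "h t = g t - s * K * f t" for t
  have h_growth: "h 0 + c * a / 2 * t \<le> h t" if "t \<ge> 0" for t
  proof (rule linear_growth_of_deriv_ge[OF _ _ that])
    fix t :: real assume "t \<ge> 0"
    show "(h has_real_derivative g' t - s * K * f' t) (at t within {0..})"
      unfolding h_def by (intro DERIV_diff DERIV_cmult dg df \<open>t \<ge> 0\<close>)
    have "c * a \<le> c * f t" using lower[OF \<open>t \<ge> 0\<close>] \<open>c > 0\<close> by simp
    then show "c * a / 2 \<le> g' t - s * K * f' t"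
      using growth[OF \<open>t \<ge> 0\<close> \<open>s > 0\<close>] \<open>B / s = c * a / 2\<close> by linarith
  qed
  have h_le: "h t \<le> B" if "t \<ge> 0" for t
  proof -
    have "0 \<le> s * K * f t"
      using lower[OF that] \<open>\<not> a \<le> 0\<close> \<open>s > 0\<close> \<open>K \<ge> 0\<close> by simp
    then show ?thesis using g_le[OF that] by (simp add: h_def)
  qed
  define T where "T = 2 * (B - h 0 + 1) / (c * a)"
  have "T \<ge> 0" using h_le[of 0] \<open>\<not> a \<le> 0\<close> \<open>c > 0\<close> by (simp add: T_def)
  moreover have "h 0 + c * a / 2 * T = B + 1"
    using \<open>\<not> a \<le> 0\<close> \<open>c > 0\<close> by (simp add: T_def field_simps)
  ultimately show False using h_growth[of T] h_le[of T] by linarith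
qed

section \<open>Limit points of states\<close>

lemma trace_matrix_mult_matrix_unit:
  "trace (A ** (\<chi> a b. if a = j \<and> b = i then 1 else 0)) = (A::'n::finite op) $ i $ j"
proof -
  have "(\<Sum>l\<in>UNIV. A$k$l * (if l = j \<and> k = i then 1 else 0)) = (if k = i then A$k$j else 0)" for k
    by (cases "k = i") (simp_all add: if_distrib cong: if_cong)
  then show ?thesis by (simp add: trace_def matrix_matrix_mult_def)
qed

lemma state_conv_component:
  assumes "state_conv r \<sigma>"
  shows "(\<lambda>k. r k $ i $ j) \<longlonglongrightarrow> \<sigma> $ i $ j"
  using assms[unfolded state_conv_def, rule_format, of "\<chi> a b. if a = j \<and> b = i then 1 else 0"]
  by (simp add: trace_matrix_mult_matrix_unit)

lemma state_conv_Re_qform: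
  assumes "state_conv r \<sigma>"
  shows "(\<lambda>k. Re (qform (r k) x)) \<longlonglongrightarrow> Re (qform \<sigma> x)"
  using tendsto_Re[OF assms[unfolded state_conv_def, rule_format, of "outer x"]]
  by (simp add: trace_matrix_mult_outer)

lemma density_state_limit:
  assumes conv: "state_conv r \<sigma>" and dens: "eventually (\<lambda>k. density_state (r k)) sequentially"
  shows "density_state \<sigma>"
proof -
  have "(\<lambda>k. trace (r k)) \<longlonglongrightarrow> trace \<sigma>"
    using conv[unfolded state_conv_def, rule_format, of "mat 1"] by simp
  moreover have "eventually (\<lambda>k. trace (r k) = 1) sequentially"
    using dens by eventually_elim (simp add: density_state_def)
  then have "(\<lambda>k. trace (r k)) \<longlonglongrightarrow> 1"
    by (rule tendsto_eventually)
  ultimately have "trace \<sigma> = 1"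
    by (rule LIMSEQ_unique)
  have "cnj (\<sigma> $ j $ i) = \<sigma> $ i $ j" for i j
  proof -
    have "eventually (\<lambda>k. cnj (r k $ j $ i) = r k $ i $ j) sequentially"
      using dens
    proof eventually_elim
      case (elim k)
      then have "self_adjoint (r k)" by (simp add: density_state_def psd_iff_qform)
      then show ?case using self_adjoint_component[of "r k" j i] by simp
    qed
    with tendsto_cnj[OF state_conv_component[OF conv]]
    have "(\<lambda>k. r k $ i $ j) \<longlonglongrightarrow> cnj (\<sigma> $ j $ i)"
      by (rule Lim_transform_eventually)
    then show ?thesis using state_conv_component[OF conv] by (rule LIMSEQ_unique)
  qed
  then have "self_adjoint \<sigma>" by (simp add: self_adjoint_def vec_eq_iff)
  moreover have "0 \<le> Re (qform \<sigma> x)" for x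
  proof (rule tendsto_lowerbound[OF state_conv_Re_qform[OF conv]])
    show "eventually (\<lambda>k. 0 \<le> Re (qform (r k) x)) sequentially"
      using dens by eventually_elim (simp add: density_state_def psd_iff_qform)
  qed simp
  ultimately show ?thesis using \<open>trace \<sigma> = 1\<close> by (simp add: density_state_def psd_iff_qform)
qed

section \<open>Trajectories of the Lindblad equation\<close>

lemma bounded_linear_trace: "bounded_linear (trace :: 'n::finite op \<Rightarrow> complex)"
  by (rule bounded_linear_op) (simp_all add: trace_add scaleR_conv_of_real)

lemma bounded_linear_Re_trace: "bounded_linear (\<lambda>A::'n::finite op. Re (trace (X ** A)))"
  by (rule bounded_linear_op) (simp_all add: matrix_add_ldistrib trace_add)

lemma bounded_linear_skew_part: "bounded_linear (\<lambda>A::'n::finite op. A - adj A)"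
  by (rule bounded_linear_op) (simp_all add: smult_op_diff scaleR_eq_smult_op)

locale lindblad_trajectory =
  fixes H L :: "'n::finite op" and \<rho> :: "real \<Rightarrow> 'n op"
  assumes self_adjoint_hamiltonian: "self_adjoint H"
    and trajectory: "\<And>t. t \<ge> 0 \<Longrightarrow> (\<rho> has_vector_derivative lindblad H L (\<rho> t)) (at t within {0..})"
begin

lemma has_real_derivative_bounded_linear:
  "bounded_linear \<phi> \<Longrightarrow> t \<ge> 0 \<Longrightarrow>
    ((\<lambda>s. \<phi> (\<rho> s)) has_real_derivative \<phi> (lindblad H L (\<rho> t))) (at t within {0..})"
  by (rule bounded_linear_has_real_derivative[OF _ trajectory])

lemma has_real_derivative_Re_trace:
  assumes "H ** X = X ** H" "t \<ge> 0"
  shows "((\<lambda>s. Re (trace (X ** \<rho> s))) has_real_derivative Re (trace (gen L X ** \<rho> t)))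
    (at t within {0..})"
  using has_real_derivative_bounded_linear[OF bounded_linear_Re_trace[of X] assms(2)]
  by (simp add: trace_matrix_mult_lindblad[OF assms(1)])

lemma trace_preserved:
  assumes "t \<ge> 0"
  shows "trace (\<rho> t) = trace (\<rho> 0)"
proof -
  have "((\<lambda>s. trace (\<rho> s)) has_derivative (\<lambda>h. 0)) (at s within {0..})" if "s \<in> {0..}" for s
    using bounded_linear.has_vector_derivative[OF bounded_linear_trace trajectory] that
    by (simp add: trace_lindblad has_vector_derivative_def)
  then obtain c where "\<forall>s\<in>{0..}. trace (\<rho> s) = c"
    using has_derivative_zero_constant[OF convex_real_interval(1)] by blast
  then show ?thesis using assms by auto
qed

text \<open>The skew part \<open>D = \<rho> - \<rho>\<^sup>\<dagger>\<close> solves the same linear equation, so Gronwall's inequality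
  for \<open>\<parallel>D\<parallel>\<^sup>2\<close> keeps it at \<open>0\<close>.\<close>

lemma self_adjoint_preserved:
  assumes init: "self_adjoint (\<rho> 0)" and "t \<ge> 0"
  shows "self_adjoint (\<rho> t)"
proof -
  define D where "D = (\<lambda>s. \<rho> s - adj (\<rho> s))"
  obtain K where K: "\<And>A. norm (lindblad H L A) \<le> norm A * K"
    using bounded_linear.pos_bounded[OF bounded_linear_lindblad[of H L]] by blast
  have D_deriv: "(D has_vector_derivative lindblad H L (D s)) (at s within {0..})" if "s \<ge> 0" for s
    using bounded_linear.has_vector_derivative[OF bounded_linear_skew_part trajectory[OF that]]
    by (simp add: D_def adj_lindblad[OF self_adjoint_hamiltonian] lindblad_diff)
  have deriv: "((\<lambda>s. inner (D s) (D s)) has_real_derivative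
      2 * inner (D s) (lindblad H L (D s))) (at s within {0..})" if "s \<ge> 0" for s
  proof -
    have "(D has_derivative (\<lambda>h. h *\<^sub>R lindblad H L (D s))) (at s within {0..})"
      using D_deriv[OF that] by (simp add: has_vector_derivative_def)
    from has_derivative_inner[OF this this]
    show ?thesis
      unfolding has_field_derivative_def
      by (rule has_derivative_eq_rhs) (simp add: fun_eq_iff inner_commute algebra_simps)
  qed
  have bound: "2 * inner (D s) (lindblad H L (D s)) \<le> 2 * K * inner (D s) (D s)" for s
  proof -
    have "inner (D s) (lindblad H L (D s)) \<le> norm (D s) * norm (lindblad H L (D s))"
      by (rule norm_cauchy_schwarz)
    also have "\<dots> \<le> norm (D s) * (norm (D s) * K)"
      by (intro mult_left_mono K) simp
    finally show ?thesis
      by (simp add: power2_norm_eq_inner[symmetric] power2_eq_square mult_ac)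
  qed
  have "inner (D t) (D t) = 0"
  proof (rule gronwall_vanishing[OF deriv bound])
    show "inner (D 0) (D 0) = 0" using init by (simp add: D_def self_adjoint_def)
  qed (simp_all add: \<open>t \<ge> 0\<close>)
  then show ?thesis by (simp add: D_def self_adjoint_def)
qed

text \<open>Positivity is proved for the perturbed forms \<open>\<langle>x, \<rho>\<^sub>t x\<rangle> + \<epsilon> exp (C t) \<parallel>x\<parallel>\<^sup>2\<close>,
  which start strictly positive. At a first time \<open>\<tau>\<close> where one of them vanishes at \<open>x\<close>, the
  vector \<open>x\<close> is in the kernel of \<open>\<rho>\<^sub>\<tau> + \<epsilon> exp (C \<tau>)\<close>, and \<open>C > \<parallel>L\<^sup>\<dagger>\<parallel>\<^sup>2\<close> makes the form
  strictly increasing at \<open>\<tau>\<close>, so it was negative just before.\<close>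

lemma perturbed_qform_pos:
  assumes sa: "self_adjoint (\<rho> \<tau>)" and KL: "\<And>y. norm (adj L *v y) \<le> KL * norm y"
    and "KL\<^sup>2 < C" "\<epsilon> > 0" "\<tau> > 0" "x \<noteq> 0"
    and nonneg: "\<And>s y. 0 \<le> s \<Longrightarrow> s \<le> \<tau> \<Longrightarrow> 0 \<le> Re (qform (\<rho> s) y) + \<epsilon> * exp (C * s) * (norm y)\<^sup>2"
  shows "0 < Re (qform (\<rho> \<tau>) x) + \<epsilon> * exp (C * \<tau>) * (norm x)\<^sup>2"
proof (rule ccontr)
  define \<phi> where "\<phi> s = Re (qform (\<rho> s) x) + \<epsilon> * exp (C * s) * (norm x)\<^sup>2" for s
  define \<delta> where "\<delta> = \<epsilon> * exp (C * \<tau>)"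
  assume "\<not> 0 < Re (qform (\<rho> \<tau>) x) + \<epsilon> * exp (C * \<tau>) * (norm x)\<^sup>2"
  then have "\<phi> \<tau> = 0" using nonneg[of \<tau> x] \<open>\<tau> > 0\<close> by (simp add: \<phi>_def)
  define M where "M = \<rho> \<tau> + smult_op (of_real \<delta>) (mat 1)"
  have qM: "Re (qform M y) = Re (qform (\<rho> \<tau>) y) + \<delta> * (norm y)\<^sup>2" for y
    by (simp add: M_def qform_add qform_smult_op)
  have "self_adjoint M" using sa by (simp add: M_def self_adjoint_def)
  then have "psd M"
    using nonneg[of \<tau>] \<open>\<tau> > 0\<close> by (simp add: psd_iff_qform qM \<delta>_def)
  then have "M *v x = 0"
    using \<open>\<phi> \<tau> = 0\<close> qM[of x] by (intro psd_qform_zero_imp_kernel) (simp_all add: \<phi>_def \<delta>_def)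
  then have ev: "\<rho> \<tau> *v x = of_real (- \<delta>) *s x"
    by (simp add: M_def matrix_vector_mult_add_rdistrib vec_eq_iff add_eq_0_iff)
  have "- \<delta> * KL\<^sup>2 * (norm x)\<^sup>2 \<le> Re (qform (lindblad H L (\<rho> \<tau>)) x)"
    using nonneg[of \<tau>] \<open>\<tau> > 0\<close> \<open>\<epsilon> > 0\<close>
    by (intro qform_lindblad_kernel_lower_bound[OF sa _ ev _ KL]) (simp_all add: \<delta>_def)
  moreover have "\<delta> * KL\<^sup>2 * (norm x)\<^sup>2 < \<delta> * C * (norm x)\<^sup>2"
    using \<open>KL\<^sup>2 < C\<close> \<open>x \<noteq> 0\<close> \<open>\<epsilon> > 0\<close> by (simp add: \<delta>_def)
  ultimately have pos: "0 < Re (qform (lindblad H L (\<rho> \<tau>)) x) + \<epsilon> * (C * exp (C * \<tau>)) * (norm x)\<^sup>2"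
    by (simp add: \<delta>_def algebra_simps)
  have "((\<lambda>s. Re (qform (\<rho> s) x)) has_real_derivative Re (qform (lindblad H L (\<rho> \<tau>)) x))
      (at \<tau> within {0..})"
    using has_real_derivative_bounded_linear[OF bounded_linear_Re_qform] \<open>\<tau> > 0\<close> by simp
  moreover have "((\<lambda>s. \<epsilon> * exp (C * s) * (norm x)\<^sup>2) has_real_derivative
      \<epsilon> * (C * exp (C * \<tau>)) * (norm x)\<^sup>2) (at \<tau> within {0..})"
    by (auto intro!: derivative_eq_intros)
  ultimately have "(\<phi> has_real_derivative
      Re (qform (lindblad H L (\<rho> \<tau>)) x) + \<epsilon> * (C * exp (C * \<tau>)) * (norm x)\<^sup>2) (at \<tau>)"
    unfolding \<phi>_def using \<open>\<tau> > 0\<close> by (intro has_real_derivative_at_interior_nonneg DERIV_add)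
  from DERIV_pos_inc_left[OF this pos] obtain d where
    "d > 0" and d: "\<And>h. 0 < h \<Longrightarrow> h < d \<Longrightarrow> \<phi> (\<tau> - h) < \<phi> \<tau>" by blast
  define h where "h = min (d / 2) \<tau>"
  have "\<phi> (\<tau> - h) < 0" using d[of h] \<open>d > 0\<close> \<open>\<tau> > 0\<close> \<open>\<phi> \<tau> = 0\<close> by (simp add: h_def)
  moreover have "0 \<le> \<phi> (\<tau> - h)" using nonneg \<open>d > 0\<close> \<open>\<tau> > 0\<close> by (simp add: \<phi>_def h_def)
  ultimately show False by simp
qed

lemma qform_trajectory_continuous:
  assumes "\<tau> \<ge> 0" "m > 0"
  shows "\<exists>d>0. \<forall>s y. 0 \<le> s \<and> dist s \<tau> < d \<longrightarrow>
    Re (qform (\<rho> \<tau>) y) - m * (norm y)\<^sup>2 \<le> Re (qform (\<rho> s) y)"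
proof -
  obtain KK where "KK \<ge> 0" and KK: "\<And>(A::'n op) y. \<bar>Re (qform A y)\<bar> \<le> KK * norm A * (norm y)\<^sup>2"
    using qform_norm_bound by blast
  have "continuous (at \<tau> within {0..}) \<rho>"
    by (rule has_vector_derivative_continuous[OF trajectory[OF \<open>\<tau> \<ge> 0\<close>]])
  then have "\<forall>e>0. \<exists>d>0. \<forall>s\<in>{0..}. dist s \<tau> < d \<longrightarrow> dist (\<rho> s) (\<rho> \<tau>) < e"
    unfolding continuous_within_eps_delta .
  moreover have "m / (KK + 1) > 0" using \<open>m > 0\<close> \<open>KK \<ge> 0\<close> by simp
  ultimately obtain d where "d > 0"
    and d: "\<forall>s\<in>{0..}. dist s \<tau> < d \<longrightarrow> dist (\<rho> s) (\<rho> \<tau>) < m / (KK + 1)"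
    by blast
  have "Re (qform (\<rho> \<tau>) y) - m * (norm y)\<^sup>2 \<le> Re (qform (\<rho> s) y)"
    if "0 \<le> s" "dist s \<tau> < d" for s y
  proof -
    have "norm (\<rho> s - \<rho> \<tau>) \<le> m / (KK + 1)"
      using d[rule_format, of s] that by (simp add: dist_norm)
    then have "KK * norm (\<rho> s - \<rho> \<tau>) \<le> KK * (m / (KK + 1))"
      using \<open>KK \<ge> 0\<close> by (rule mult_left_mono)
    also have "\<dots> \<le> m"
      using \<open>KK \<ge> 0\<close> \<open>m > 0\<close> by (simp add: field_simps)
    finally have "KK * norm (\<rho> s - \<rho> \<tau>) \<le> m" .
    have "\<bar>Re (qform (\<rho> s - \<rho> \<tau>) y)\<bar> \<le> KK * norm (\<rho> s - \<rho> \<tau>) * (norm y)\<^sup>2"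
      by (rule KK)
    also have "\<dots> \<le> m * (norm y)\<^sup>2"
      by (rule mult_right_mono[OF \<open>KK * norm (\<rho> s - \<rho> \<tau>) \<le> m\<close> zero_le_power2])
    finally show ?thesis by (simp add: qform_diff abs_le_iff)
  qed
  then show ?thesis using \<open>d > 0\<close> by blast
qed

lemma perturbed_qform_nonneg_right:
  assumes sa: "self_adjoint (\<rho> \<tau>)" and init: "psd (\<rho> 0)"
    and KL: "\<And>y. norm (adj L *v y) \<le> KL * norm y" and "KL\<^sup>2 < C" "\<epsilon> > 0" "\<tau> \<ge> 0"
    and nonneg: "\<And>s y. 0 \<le> s \<Longrightarrow> s \<le> \<tau> \<Longrightarrow> 0 \<le> Re (qform (\<rho> s) y) + \<epsilon> * exp (C * s) * (norm y)\<^sup>2"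
  shows "\<exists>d>0. \<forall>s y. \<tau> \<le> s \<and> s < \<tau> + d \<longrightarrow> 0 \<le> Re (qform (\<rho> s) y) + \<epsilon> * exp (C * s) * (norm y)\<^sup>2"
proof -
  define M where "M = \<rho> \<tau> + smult_op (of_real (\<epsilon> * exp (C * \<tau>))) (mat 1)"
  have qM: "Re (qform M y) = Re (qform (\<rho> \<tau>) y) + \<epsilon> * exp (C * \<tau>) * (norm y)\<^sup>2" for y
    by (simp add: M_def qform_add qform_smult_op del: of_real_mult)
  obtain x0 where "norm x0 = 1" and x0: "\<And>y. norm y = 1 \<Longrightarrow> Re (qform M x0) \<le> Re (qform M y)"
    using qform_attains_min_on_sphere by blast
  define m where "m = Re (qform M x0)"
  have "x0 \<noteq> 0" using \<open>norm x0 = 1\<close> by auto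
  have "m > 0"
  proof (cases "\<tau> = 0")
    case True
    then show ?thesis
      using init \<open>norm x0 = 1\<close> \<open>\<epsilon> > 0\<close> by (simp add: m_def qM psd_iff_qform add_nonneg_pos)
  next
    case False
    then show ?thesis
      using perturbed_qform_pos[OF sa KL \<open>KL\<^sup>2 < C\<close> \<open>\<epsilon> > 0\<close> _ \<open>x0 \<noteq> 0\<close> nonneg]
        \<open>\<tau> \<ge> 0\<close> \<open>norm x0 = 1\<close> by (simp add: m_def qM)
  qed
  have m: "m * (norm y)\<^sup>2 \<le> Re (qform M y)" for y
    using x0 by (intro qform_ge_of_sphere_bound) (simp add: m_def)
  obtain d where "d > 0" and d: "\<And>s y. 0 \<le> s \<Longrightarrow> dist s \<tau> < d \<Longrightarrow>
      Re (qform (\<rho> \<tau>) y) - m * (norm y)\<^sup>2 \<le> Re (qform (\<rho> s) y)"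
    using qform_trajectory_continuous[OF \<open>\<tau> \<ge> 0\<close> \<open>m > 0\<close>] by blast
  have "0 \<le> Re (qform (\<rho> s) y) + \<epsilon> * exp (C * s) * (norm y)\<^sup>2" if "\<tau> \<le> s" "s < \<tau> + d" for s y
  proof -
    have "C \<ge> 0" using \<open>KL\<^sup>2 < C\<close> zero_le_power2[of KL] by linarith
    then have "\<epsilon> * exp (C * \<tau>) * (norm y)\<^sup>2 \<le> \<epsilon> * exp (C * s) * (norm y)\<^sup>2"
      using \<open>\<tau> \<le> s\<close> \<open>\<epsilon> > 0\<close> by (intro mult_right_mono mult_left_mono) (simp_all add: mult_left_mono)
    moreover have "Re (qform (\<rho> \<tau>) y) - m * (norm y)\<^sup>2 \<le> Re (qform (\<rho> s) y)"
      using d[of s y] that \<open>\<tau> \<ge> 0\<close> by (simp add: dist_real_def)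
    ultimately show ?thesis
      using m[of y] unfolding qM by linarith
  qed
  then show ?thesis using \<open>d > 0\<close> by blast
qed

lemma perturbed_qform_nonneg:
  assumes sa: "\<And>t. t \<ge> 0 \<Longrightarrow> self_adjoint (\<rho> t)" and init: "psd (\<rho> 0)"
    and KL: "\<And>y. norm (adj L *v y) \<le> KL * norm y" and "KL\<^sup>2 < C" "\<epsilon> > 0" "t \<ge> 0"
  shows "0 \<le> Re (qform (\<rho> t) x) + \<epsilon> * exp (C * t) * (norm x)\<^sup>2"
proof -
  define \<phi> where "\<phi> s y = Re (qform (\<rho> s) y) + \<epsilon> * exp (C * s) * (norm y)\<^sup>2" for s y
  have "\<forall>y. 0 \<le> \<phi> t y"
  proof (rule real_induct_nonneg[OF _ _ \<open>t \<ge> 0\<close>])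
    fix \<tau> :: real assume "\<tau> \<ge> 0" and below: "\<And>s. 0 \<le> s \<Longrightarrow> s < \<tau> \<Longrightarrow> \<forall>y. 0 \<le> \<phi> s y"
    show "\<forall>y. 0 \<le> \<phi> \<tau> y"
    proof (cases "\<tau> = 0")
      case True
      then show ?thesis using init \<open>\<epsilon> > 0\<close> by (simp add: \<phi>_def psd_iff_qform)
    next
      case False
      show ?thesis
      proof
        fix y
        have "continuous (at \<tau> within {0..}) (\<lambda>s. Re (qform (\<rho> s) y))"
          using has_real_derivative_bounded_linear[OF bounded_linear_Re_qform \<open>\<tau> \<ge> 0\<close>]
          by (rule DERIV_continuous)
        then have "continuous (at \<tau> within {0..}) (\<lambda>s. \<phi> s y)"
          unfolding \<phi>_def by (intro continuous_intros)
        then show "0 \<le> \<phi> \<tau> y"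
          by (rule nonneg_of_continuous_from_left) (use False \<open>\<tau> \<ge> 0\<close> below in auto)
      qed
    qed
  next
    fix \<tau> :: real assume "\<tau> \<ge> 0" and upto: "\<And>s. 0 \<le> s \<Longrightarrow> s \<le> \<tau> \<Longrightarrow> \<forall>y. 0 \<le> \<phi> s y"
    show "\<exists>d>0. \<forall>s. \<tau> \<le> s \<and> s < \<tau> + d \<longrightarrow> (\<forall>y. 0 \<le> \<phi> s y)"
      using perturbed_qform_nonneg_right[OF sa[OF \<open>\<tau> \<ge> 0\<close>] init KL \<open>KL\<^sup>2 < C\<close> \<open>\<epsilon> > 0\<close> \<open>\<tau> \<ge> 0\<close>]
        upto unfolding \<phi>_def by blast
  qed
  then show ?thesis by (simp add: \<phi>_def)
qed

lemma psd_preserved: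
  assumes init: "psd (\<rho> 0)" and "t \<ge> 0"
  shows "psd (\<rho> t)"
proof -
  have sa: "\<And>t. t \<ge> 0 \<Longrightarrow> self_adjoint (\<rho> t)"
    using self_adjoint_preserved init by (simp add: psd_iff_qform)
  obtain KL where KL: "\<And>y. norm (adj L *v y) \<le> KL * norm y"
    using matrix_vector_mult_bounded by blast
  have "0 \<le> Re (qform (\<rho> t) x)" for x
  proof (rule field_le_epsilon)
    fix e :: real assume "e > 0"
    define k where "k = exp ((KL\<^sup>2 + 1) * t) * (norm x)\<^sup>2 + 1"
    have "k > 0" by (simp add: k_def add_nonneg_pos)
    have "0 \<le> Re (qform (\<rho> t) x) + e / k * exp ((KL\<^sup>2 + 1) * t) * (norm x)\<^sup>2"
      using \<open>e > 0\<close> \<open>k > 0\<close> by (intro perturbed_qform_nonneg[OF sa init KL _ _ \<open>t \<ge> 0\<close>]) simp_all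
    also have "e / k * exp ((KL\<^sup>2 + 1) * t) * (norm x)\<^sup>2 \<le> e"
      using \<open>e > 0\<close> \<open>k > 0\<close> by (simp add: k_def field_simps)
    finally show "0 \<le> Re (qform (\<rho> t) x) + e" by simp
  qed
  then show ?thesis using sa[OF \<open>t \<ge> 0\<close>] by (simp add: psd_iff_qform)
qed

lemma density_state_preserved:
  assumes "density_state (\<rho> 0)" "t \<ge> 0"
  shows "density_state (\<rho> t)"
  using psd_preserved[of t] trace_preserved[of t] assms by (simp add: density_state_def)

lemma lyapunov_value_decreasing:
  assumes commute: "H ** V = V ** H" and lyap: "lyapunov_op L V"
    and init: "density_state (\<rho> 0)" and "0 \<le> s" "s \<le> t"
  shows "Re (trace (V ** \<rho> t)) \<le> Re (trace (V ** \<rho> s))"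
proof -
  have "- Re (trace (V ** \<rho> s)) \<le> - Re (trace (V ** \<rho> t))"
  proof (rule increasing_of_deriv_nonneg[of "\<lambda>t. - Re (trace (V ** \<rho> t))"
        "\<lambda>t. - Re (trace (gen L V ** \<rho> t))" s t])
    fix t :: real assume "t \<ge> 0"
    show "((\<lambda>t. - Re (trace (V ** \<rho> t))) has_real_derivative - Re (trace (gen L V ** \<rho> t)))
        (at t within {0..})"
      by (intro DERIV_minus has_real_derivative_Re_trace commute \<open>t \<ge> 0\<close>)
    have "psd (\<rho> t)"
      using density_state_preserved[OF init \<open>t \<ge> 0\<close>] by (simp add: density_state_def)
    then have "Re (trace (gen L V ** \<rho> t)) \<le> Re (trace (0 ** \<rho> t))"
      using lyap by (intro Re_trace_mono_psd loewner_le_qform) (simp_all add: lyapunov_op_def)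
    then show "0 \<le> - Re (trace (gen L V ** \<rho> t))" by simp
  qed (use assms in auto)
  then show ?thesis by simp
qed

lemma lyapunov_lower_bound_nonpos:
  assumes commute: "H ** V = V ** H" and lyap: "lyapunov_op L V" and "c > 0"
    and bound: "loewner_le (smult_op (of_real c) V) (dissip L V)"
    and init: "density_state (\<rho> 0)" and lower: "\<And>t. t \<ge> 0 \<Longrightarrow> a \<le> Re (trace (V ** \<rho> t))"
  shows "a \<le> 0"
proof -
  have sV: "self_adjoint V" and G: "loewner_le (gen L V) 0"
    using lyap by (auto simp: lyapunov_op_def)
  obtain KV where "KV > 0" and KV: "\<And>y. norm (V *v y) \<le> KV * norm y"
    using matrix_vector_mult_bounded by blast
  obtain KG where "KG > 0" and KG: "\<And>y. norm (gen L V *v y) \<le> KG * norm y"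
    using matrix_vector_mult_bounded by blast
  have commute2: "H ** (V ** V) = (V ** V) ** H"
    using commute by (metis matrix_mul_assoc)
  note \<rho> = density_state_preserved[OF init]
  show ?thesis
  proof (rule lower_bound_nonpos_of_growth[OF _ _ _ _ _ \<open>c > 0\<close> _ lower])
    fix t s :: real assume "t \<ge> 0"
    show "((\<lambda>t. Re (trace (V ** \<rho> t))) has_real_derivative Re (trace (gen L V ** \<rho> t)))
        (at t within {0..})"
      by (rule has_real_derivative_Re_trace[OF commute \<open>t \<ge> 0\<close>])
    show "((\<lambda>t. Re (trace ((V ** V) ** \<rho> t))) has_real_derivative
        Re (trace (gen L (V ** V) ** \<rho> t))) (at t within {0..})"
      by (rule has_real_derivative_Re_trace[OF commute2 \<open>t \<ge> 0\<close>])
    show "Re (trace ((V ** V) ** \<rho> t)) \<le> KV\<^sup>2"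
      by (rule Re_trace_square_le[OF sV KV \<rho>[OF \<open>t \<ge> 0\<close>]])
    assume "s > 0"
    then show "c * Re (trace (V ** \<rho> t)) + s * KG * Re (trace (gen L V ** \<rho> t)) - KV\<^sup>2 / s
        \<le> Re (trace (gen L (V ** V) ** \<rho> t))"
      by (rule Re_trace_gen_square_lower_bound[OF sV G bound KG KV _ \<rho>[OF \<open>t \<ge> 0\<close>]])
  qed (use \<open>KV > 0\<close> \<open>KG > 0\<close> in simp_all)
qed

lemma limit_point_density_state:
  assumes init: "density_state (\<rho> 0)" and "limit_point_at_top \<rho> \<sigma>"
  shows "density_state \<sigma>"
proof -
  obtain ts where "filterlim ts at_top sequentially" and conv: "state_conv (\<lambda>k. \<rho> (ts k)) \<sigma>"
    using assms(2) by (auto simp: limit_point_at_top_def)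
  then have "eventually (\<lambda>k. 0 \<le> ts k) sequentially"
    by (simp add: filterlim_at_top)
  then show ?thesis
    by (intro density_state_limit[OF conv]) (auto elim: eventually_mono
        intro: density_state_preserved[OF init])
qed

lemma limit_point_lyapunov_value_nonpos:
  assumes commute: "H ** V = V ** H" and lyap: "lyapunov_op L V" and "c > 0"
    and bound: "loewner_le (smult_op (of_real c) V) (dissip L V)"
    and init: "density_state (\<rho> 0)" and "limit_point_at_top \<rho> \<sigma>"
  shows "Re (trace (V ** \<sigma>)) \<le> 0"
proof -
  obtain ts where ts: "filterlim ts at_top sequentially" and conv: "state_conv (\<lambda>k. \<rho> (ts k)) \<sigma>"
    using assms(6) by (auto simp: limit_point_at_top_def)
  have "(\<lambda>k. Re (trace (V ** \<rho> (ts k)))) \<longlonglongrightarrow> Re (trace (V ** \<sigma>))"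
    using tendsto_Re[OF conv[unfolded state_conv_def, rule_format, of V]]
    by (simp add: trace_mul_sym[of _ V])
  then have "Re (trace (V ** \<sigma>)) \<le> Re (trace (V ** \<rho> t))" if "t \<ge> 0" for t
    using ts that unfolding filterlim_at_top
    by (intro tendsto_upperbound) (auto elim!: eventually_mono
        intro: lyapunov_value_decreasing[OF commute lyap init])
  then show ?thesis
    by (rule lyapunov_lower_bound_nonpos[OF commute lyap \<open>c > 0\<close> bound init])
qed

end

theorem lemma12:
  fixes H L V :: "complex^'n::finite^'n"
    and \<rho> :: "real \<Rightarrow> complex^'n^'n"
    and c :: real
  assumes hamiltonian: "self_adjoint H"
    and commute: "H ** V = V ** H"
    and lyap: "lyapunov_op L V"
    and c_pos: "c > 0"
    and bound: "loewner_le (smult_op (complex_of_real c) V) (dissip L V)"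
    and init: "density_state (\<rho> 0)"
    and traj: "\<And>t. t \<ge> 0 \<Longrightarrow> (\<rho> has_vector_derivative lindblad H L (\<rho> t)) (at t within {0..})"
  shows "\<forall>\<sigma>. limit_point_at_top \<rho> \<sigma> \<longrightarrow> \<sigma> \<in> Z_set V"
proof (intro allI impI)
  fix \<sigma> assume "limit_point_at_top \<rho> \<sigma>"
  interpret lindblad_trajectory H L \<rho>
    using hamiltonian traj by unfold_locales
  have "density_state \<sigma>"
    by (rule limit_point_density_state[OF init \<open>limit_point_at_top \<rho> \<sigma>\<close>])
  then have "psd \<sigma>" by (simp add: density_state_def)
  have "Re (trace (V ** \<sigma>)) \<le> 0"
    by (rule limit_point_lyapunov_value_nonpos[OF commute lyap c_pos bound init
          \<open>limit_point_at_top \<rho> \<sigma>\<close>])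
  moreover have "0 \<le> Re (trace (V ** \<sigma>))"
    using Re_trace_mono_psd[OF \<open>psd \<sigma>\<close>, of 0 V] lyap by (simp add: lyapunov_op_def psd_iff_qform)
  moreover have "Im (trace (V ** \<sigma>)) = 0"
    using Im_trace_self_adjoint_psd[OF _ \<open>psd \<sigma>\<close>] lyap by (simp add: lyapunov_op_def)
  ultimately have "trace (V ** \<sigma>) = 0"
    by (simp add: complex_eq_iff)
  then show "\<sigma> \<in> Z_set V"
    using \<open>density_state \<sigma>\<close> by (simp add: Z_set_def)
qed

end
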